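(* Let $p$ be prime, $n\ge2$, and $G$ a profinite group. Then $$\bigcap_{s=1}^{n}T^{\bar{\mathbb{U}}_{n,s}}(G)=\bigcap_{s=1}^{n-1}T^{\mathbb{U}_{n-1,s}}(G).$$
   Context: For profinite groups $\mathbb{U}$ and $G$, $T^{\mathbb{U}}(G)$ denotes the intersection of the kernels of all continuous homomorphisms $G\to\mathbb{U}$. For a commutative ring $R$, $\mathbb{U}_s(R)$ is the group of unipotent upper-triangular $(s+1)\times(s+1)$ matrices over $R$. For $1\le s\le k$ put $\mathbb{U}_{k,s}=\mathbb{U}_s(\mathbb{Z}/p^{k-s+1})$, and let $\bar{\mathbb{U}}_{k,s}$ be the quotient of $\mathbb{U}_{k,s}$ by the central subgroup of order $p$ generated by $I+p^{k-s}E_{1,s+1}$. (E.g. $\mathbb{U}_{k,1}\cong\mathbb{Z}/p^k$, $\bar{\mathbb{U}}_{k,1}\cong\mathbb{Z}/p^{k-1}$, and $\mathbb{U}_{k,k}=\mathbb{U}_k(\mathbb{Z}/p)$.) *)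

theory Defs
  imports "HOL-Analysis.Analysis" "HOL-Algebra.Algebra"
begin

definition profinite_group :: "('a, 'b) monoid_scheme \<Rightarrow> 'a topology \<Rightarrow> bool" where
  "profinite_group G T \<longleftrightarrow>
     group G \<and> topspace T = carrier G \<and>
     continuous_map (prod_topology T T) T (\<lambda>(x, y). x \<otimes>\<^bsub>G\<^esub> y) \<and>
     continuous_map T T (\<lambda>x. inv\<^bsub>G\<^esub> x) \<and>
     compact_space T \<and> Hausdorff_space T \<and>
     (\<forall>x \<in> topspace T. connected_component_of_set T x = {x})"

definition T_of :: "('c, 'd) monoid_scheme \<Rightarrow> ('a, 'b) monoid_scheme \<Rightarrow> 'a topology \<Rightarrow> 'a set" where
  "T_of U G T = carrier G \<inter>
     \<Inter> {kernel G U h | h. h \<in> hom G U \<and> continuous_map T (discrete_topology (carrier U)) h}"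

text \<open>Matrices are functions nat \<Rightarrow> nat \<Rightarrow> int, indices in {1..s+1}, zero outside,
  entries reduced to {0..<m} (representing Z/m).\<close>

definition unitri_carrier :: "nat \<Rightarrow> int \<Rightarrow> (nat \<Rightarrow> nat \<Rightarrow> int) set" where
  "unitri_carrier s m = {A. (\<forall>i j. A i j \<noteq> 0 \<longrightarrow> i \<in> {1..s+1} \<and> j \<in> {1..s+1}) \<and>
       (\<forall>i \<in> {1..s+1}. A i i = 1 mod m) \<and>
       (\<forall>i j. j < i \<longrightarrow> A i j = 0) \<and>
       (\<forall>i j. A i j \<in> {0..<m})}"

definition mat_one :: "nat \<Rightarrow> int \<Rightarrow> nat \<Rightarrow> nat \<Rightarrow> int" where
  "mat_one s m i j = (if i = j \<and> i \<in> {1..s+1} then 1 mod m else 0)"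

definition mat_mult :: "nat \<Rightarrow> int \<Rightarrow> (nat \<Rightarrow> nat \<Rightarrow> int) \<Rightarrow> (nat \<Rightarrow> nat \<Rightarrow> int) \<Rightarrow> nat \<Rightarrow> nat \<Rightarrow> int" where
  "mat_mult s m A B i j =
     (if i \<in> {1..s+1} \<and> j \<in> {1..s+1} then (\<Sum>k\<in>{1..s+1}. A i k * B k j) mod m else 0)"

definition Unip :: "nat \<Rightarrow> int \<Rightarrow> (nat \<Rightarrow> nat \<Rightarrow> int) monoid" where
  "Unip s m = \<lparr>carrier = unitri_carrier s m, monoid.mult = mat_mult s m, one = mat_one s m\<rparr>"

definition Ukp :: "nat \<Rightarrow> nat \<Rightarrow> nat \<Rightarrow> (nat \<Rightarrow> nat \<Rightarrow> int) monoid" where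
  "Ukp p k s = Unip s (int p ^ (k - s + 1))"

text \<open>The central element I + p^(k-s) E_{1,s+1} of U_{k,s}.\<close>

definition central_elt :: "nat \<Rightarrow> nat \<Rightarrow> nat \<Rightarrow> nat \<Rightarrow> nat \<Rightarrow> int" where
  "central_elt p k s =
     (mat_one s (int p ^ (k - s + 1)))(1 := ((mat_one s (int p ^ (k - s + 1))) 1)(s + 1 := int p ^ (k - s)))"

definition Ubar :: "nat \<Rightarrow> nat \<Rightarrow> nat \<Rightarrow> (nat \<Rightarrow> nat \<Rightarrow> int) set monoid" where
  "Ubar p k s = Ukp p k s Mod generate (Ukp p k s) {central_elt p k s}"

end

theory Submission
  imports Defs
begin

text \<open>Both sides are intersections of kernels, and composing with homomorphisms shows
  T^V(G) \<subseteq> T^U(G) whenever a homomorphism out of U, or a family of them, has trivial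
  (common) kernel. Bordering a matrix with a new last row and column embeds U_{n-1,s} into
  Ubar_{n,s+1}: a bordered matrix has corner entry 0, so it lies in the central subgroup only
  if it is the identity. Conversely, Ubar_{n,s} maps to U_{n-1,s} by reducing the entries modulo
  p^(n-s), and to U_{n-1,s-1} by taking the upper left and the lower right s \<times> s blocks; a
  matrix killed by all three maps differs from the identity only by a multiple of p^(n-s) in
  the corner, i.e. it lies in the central subgroup.\<close>

lemma T_of_subset_carrier: "T_of U G T \<subseteq> carrier G"
  unfolding T_of_def by blast

lemma T_of_subset_if_separating:
  fixes U :: "('c, 'd) monoid_scheme" and F :: "(('e, 'f) monoid_scheme \<times> ('c \<Rightarrow> 'e)) set"
  assumes homs: "\<And>V f. (V, f) \<in> F \<Longrightarrow> f \<in> hom U V"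
    and separating: "\<And>a. a \<in> carrier U \<Longrightarrow> (\<And>V f. (V, f) \<in> F \<Longrightarrow> f a = \<one>\<^bsub>V\<^esub>) \<Longrightarrow> a = \<one>\<^bsub>U\<^esub>"
  shows "carrier G \<inter> (\<Inter>(V, f)\<in>F. T_of V G T) \<subseteq> T_of U G T"
proof
  fix x assume x: "x \<in> carrier G \<inter> (\<Inter>(V, f)\<in>F. T_of V G T)"
  have "x \<in> kernel G U h"
    if h: "h \<in> hom G U" "continuous_map T (discrete_topology (carrier U)) h" for h
  proof -
    have hx: "h x \<in> carrier U" using h x by (auto simp: hom_def)
    have "f (h x) = \<one>\<^bsub>V\<^esub>" if VF: "(V, f) \<in> F" for V f
    proof -
      have fh: "f \<in> hom U V" using homs VF .
      have "f \<circ> h \<in> hom G V" using fh h(1) by (auto simp: hom_def Pi_iff)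
      moreover have "continuous_map T (discrete_topology (carrier V)) (f \<circ> h)"
        by (rule continuous_map_compose[OF h(2)]) (use fh in \<open>auto simp: hom_def\<close>)
      ultimately have "x \<in> kernel G V (f \<circ> h)" using x VF unfolding T_of_def by blast
      thus ?thesis by (simp add: kernel_def)
    qed
    hence "h x = \<one>\<^bsub>U\<^esub>" using separating[OF hx] by blast
    thus ?thesis using x by (simp add: kernel_def)
  qed
  thus "x \<in> T_of U G T" using x unfolding T_of_def by blast
qed

lemma T_of_subset_if_injective_hom:
  assumes "f \<in> hom U V" and "\<And>a. a \<in> carrier U \<Longrightarrow> f a = \<one>\<^bsub>V\<^esub> \<Longrightarrow> a = \<one>\<^bsub>U\<^esub>"
  shows "T_of V G T \<subseteq> T_of U G T"
  using T_of_subset_if_separating[of "{(V, f)}" U G T] assms T_of_subset_carrier[of V G T] by auto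

section \<open>Quotients of monoids\<close>

lemma (in monoid) r_coset_mult_central:
  assumes N: "N \<subseteq> carrier G" "\<one> \<in> N" and closed: "\<And>x y. x \<in> N \<Longrightarrow> y \<in> N \<Longrightarrow> x \<otimes> y \<in> N"
    and central: "\<And>n g. n \<in> N \<Longrightarrow> g \<in> carrier G \<Longrightarrow> n \<otimes> g = g \<otimes> n"
    and x: "x \<in> carrier G" and y: "y \<in> carrier G"
  shows "(N #> x) <#> (N #> y) = N #> (x \<otimes> y)"
proof
  show "(N #> x) <#> (N #> y) \<subseteq> N #> (x \<otimes> y)"
  proof
    fix z assume "z \<in> (N #> x) <#> (N #> y)"
    then obtain n1 n2 where n: "n1 \<in> N" "n2 \<in> N" and z: "z = (n1 \<otimes> x) \<otimes> (n2 \<otimes> y)"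
      unfolding r_coset_def set_mult_def by blast
    have c: "n1 \<in> carrier G" "n2 \<in> carrier G" using n N by auto
    have "z = n1 \<otimes> (x \<otimes> n2) \<otimes> y" using z c x y by (simp add: m_assoc)
    also have "\<dots> = n1 \<otimes> (n2 \<otimes> x) \<otimes> y" using central[OF n(2) x] by simp
    also have "\<dots> = (n1 \<otimes> n2) \<otimes> (x \<otimes> y)" using c x y by (simp add: m_assoc)
    finally show "z \<in> N #> (x \<otimes> y)" using closed[OF n] unfolding r_coset_def by blast
  qed
  show "N #> (x \<otimes> y) \<subseteq> (N #> x) <#> (N #> y)"
  proof
    fix z assume "z \<in> N #> (x \<otimes> y)"
    then obtain n where n: "n \<in> N" and z: "z = n \<otimes> (x \<otimes> y)" unfolding r_coset_def by blast
    have "z = (n \<otimes> x) \<otimes> (\<one> \<otimes> y)" using z n N x y by (auto simp: m_assoc)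
    thus "z \<in> (N #> x) <#> (N #> y)" using n N unfolding r_coset_def set_mult_def by blast
  qed
qed

lemma hom_image_r_coset:
  assumes U: "monoid U" and V: "monoid V" and N: "N \<subseteq> carrier U" "\<one>\<^bsub>U\<^esub> \<in> N"
    and \<psi>: "\<psi> \<in> hom U V" and kills: "\<forall>n\<in>N. \<psi> n = \<one>\<^bsub>V\<^esub>"
    and a: "a \<in> carrier U" and x: "x \<in> N #>\<^bsub>U\<^esub> a"
  shows "x \<in> carrier U" and "\<psi> x = \<psi> a"
proof -
  obtain n where n: "n \<in> N" and xn: "x = n \<otimes>\<^bsub>U\<^esub> a" using x unfolding r_coset_def by blast
  have nc: "n \<in> carrier U" using n N(1) by blast
  show "x \<in> carrier U" using xn monoid.m_closed[OF U nc a] by simp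
  have "\<psi> (n \<otimes>\<^bsub>U\<^esub> a) = \<psi> n \<otimes>\<^bsub>V\<^esub> \<psi> a" using \<psi> nc a by (simp add: hom_def)
  also have "\<dots> = \<psi> a" using kills n monoid.l_one[OF V] hom_in_carrier[OF \<psi> a] by simp
  finally show "\<psi> x = \<psi> a" using xn by simp
qed

lemma r_coset_self_mem:
  assumes "monoid U" "\<one>\<^bsub>U\<^esub> \<in> N" "a \<in> carrier U"
  shows "a \<in> N #>\<^bsub>U\<^esub> a"
  using assms monoid.l_one[of U a] unfolding r_coset_def by force

lemma the_elem_image_r_coset:
  assumes "monoid U" "monoid V" "N \<subseteq> carrier U" "\<one>\<^bsub>U\<^esub> \<in> N"
    and "\<psi> \<in> hom U V" "\<forall>n\<in>N. \<psi> n = \<one>\<^bsub>V\<^esub>" and a: "a \<in> carrier U"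
  shows "the_elem (\<psi> ` (N #>\<^bsub>U\<^esub> a)) = \<psi> a"
proof -
  have "\<psi> ` (N #>\<^bsub>U\<^esub> a) = {\<psi> a}"
    using hom_image_r_coset(2)[OF assms] r_coset_self_mem[OF assms(1,4) a] by blast
  thus ?thesis by simp
qed

lemma hom_image_set_mult_r_cosets:
  assumes U: "monoid U" and V: "monoid V" and N: "N \<subseteq> carrier U" "\<one>\<^bsub>U\<^esub> \<in> N"
    and \<psi>: "\<psi> \<in> hom U V" and kills: "\<forall>n\<in>N. \<psi> n = \<one>\<^bsub>V\<^esub>"
    and a: "a \<in> carrier U" and b: "b \<in> carrier U"
  shows "\<psi> ` ((N #>\<^bsub>U\<^esub> a) <#>\<^bsub>U\<^esub> (N #>\<^bsub>U\<^esub> b)) = {\<psi> a \<otimes>\<^bsub>V\<^esub> \<psi> b}"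
proof
  note in_coset = hom_image_r_coset[OF U V N \<psi> kills]
  show "\<psi> ` ((N #>\<^bsub>U\<^esub> a) <#>\<^bsub>U\<^esub> (N #>\<^bsub>U\<^esub> b)) \<subseteq> {\<psi> a \<otimes>\<^bsub>V\<^esub> \<psi> b}"
  proof
    fix w assume "w \<in> \<psi> ` ((N #>\<^bsub>U\<^esub> a) <#>\<^bsub>U\<^esub> (N #>\<^bsub>U\<^esub> b))"
    then obtain x y where x: "x \<in> N #>\<^bsub>U\<^esub> a" and y: "y \<in> N #>\<^bsub>U\<^esub> b"
      and w: "w = \<psi> (x \<otimes>\<^bsub>U\<^esub> y)"
      unfolding set_mult_def by blast
    have "\<psi> (x \<otimes>\<^bsub>U\<^esub> y) = \<psi> x \<otimes>\<^bsub>V\<^esub> \<psi> y"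
      using \<psi> in_coset(1)[OF a x] in_coset(1)[OF b y] by (simp add: hom_def)
    thus "w \<in> {\<psi> a \<otimes>\<^bsub>V\<^esub> \<psi> b}" using w in_coset(2)[OF a x] in_coset(2)[OF b y] by simp
  qed
  have "a \<otimes>\<^bsub>U\<^esub> b \<in> (N #>\<^bsub>U\<^esub> a) <#>\<^bsub>U\<^esub> (N #>\<^bsub>U\<^esub> b)"
    using r_coset_self_mem[OF U N(2) a] r_coset_self_mem[OF U N(2) b] unfolding set_mult_def by blast
  moreover have "\<psi> (a \<otimes>\<^bsub>U\<^esub> b) = \<psi> a \<otimes>\<^bsub>V\<^esub> \<psi> b" using \<psi> a b by (simp add: hom_def)
  ultimately show "{\<psi> a \<otimes>\<^bsub>V\<^esub> \<psi> b} \<subseteq> \<psi> ` ((N #>\<^bsub>U\<^esub> a) <#>\<^bsub>U\<^esub> (N #>\<^bsub>U\<^esub> b))" by force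
qed

lemma induced_hom_Mod:
  assumes U: "monoid U" and V: "monoid V" and N: "N \<subseteq> carrier U" "\<one>\<^bsub>U\<^esub> \<in> N"
    and \<psi>: "\<psi> \<in> hom U V" and kills: "\<forall>n\<in>N. \<psi> n = \<one>\<^bsub>V\<^esub>"
  shows "(\<lambda>Z. the_elem (\<psi> ` Z)) \<in> hom (U Mod N) V"
proof (rule homI)
  fix Z assume "Z \<in> carrier (U Mod N)"
  then obtain a where a: "a \<in> carrier U" and Z: "Z = N #>\<^bsub>U\<^esub> a"
    unfolding FactGroup_def RCOSETS_def by auto
  show "the_elem (\<psi> ` Z) \<in> carrier V"
    using the_elem_image_r_coset[OF U V N \<psi> kills a] hom_in_carrier[OF \<psi> a] Z by simp
next
  fix Z Y assume "Z \<in> carrier (U Mod N)" "Y \<in> carrier (U Mod N)"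
  then obtain a b where a: "a \<in> carrier U" and Z: "Z = N #>\<^bsub>U\<^esub> a"
    and b: "b \<in> carrier U" and Y: "Y = N #>\<^bsub>U\<^esub> b"
    unfolding FactGroup_def RCOSETS_def by auto
  show "the_elem (\<psi> ` (Z \<otimes>\<^bsub>U Mod N\<^esub> Y)) = the_elem (\<psi> ` Z) \<otimes>\<^bsub>V\<^esub> the_elem (\<psi> ` Y)"
    using hom_image_set_mult_r_cosets[OF U V N \<psi> kills a b]
      the_elem_image_r_coset[OF U V N \<psi> kills] a b Z Y by (simp add: FactGroup_def)
qed

declare sum.cl_ivl_Suc[simp del]

lemma mod_sum_mult_left_eq:
  "(\<Sum>k\<in>K. (f k mod (m::int)) * g k) mod m = (\<Sum>k\<in>K. f k * g k) mod m"
proof -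
  have "(\<Sum>k\<in>K. (f k mod m) * g k) mod m = (\<Sum>k\<in>K. ((f k mod m) * g k) mod m) mod m"
    by (simp add: mod_sum_eq)
  also have "\<dots> = (\<Sum>k\<in>K. (f k * g k) mod m) mod m" by (simp add: mod_mult_left_eq)
  also have "\<dots> = (\<Sum>k\<in>K. f k * g k) mod m" by (simp add: mod_sum_eq)
  finally show ?thesis .
qed

lemma mod_sum_mult_right_eq:
  "(\<Sum>k\<in>K. g k * (f k mod (m::int))) mod m = (\<Sum>k\<in>K. g k * f k) mod m"
  using mod_sum_mult_left_eq[of f m g K] by (simp add: mult.commute)

lemma mat_mult_eq:
  "i \<in> {1..s+1} \<Longrightarrow> j \<in> {1..s+1} \<Longrightarrow> mat_mult s m A B i j = (\<Sum>k\<in>{1..s+1}. A i k * B k j) mod m"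
  by (simp add: mat_mult_def)

lemma mat_mult_outside: "\<not> (i \<in> {1..s+1} \<and> j \<in> {1..s+1}) \<Longrightarrow> mat_mult s m A B i j = 0"
  unfolding mat_mult_def by (rule if_not_P)

lemma mat_mult_assoc: "mat_mult s m (mat_mult s m A B) C = mat_mult s m A (mat_mult s m B C)"
proof (intro ext)
  fix i j
  show "mat_mult s m (mat_mult s m A B) C i j = mat_mult s m A (mat_mult s m B C) i j"
  proof (cases "i \<in> {1..s+1} \<and> j \<in> {1..s+1}")
    case True
    let ?I = "{1..s+1}"
    have "mat_mult s m (mat_mult s m A B) C i j = (\<Sum>k\<in>?I. mat_mult s m A B i k * C k j) mod m"
      using True by (intro mat_mult_eq) auto
    also have "\<dots> = (\<Sum>k\<in>?I. ((\<Sum>l\<in>?I. A i l * B l k) mod m) * C k j) mod m"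
      by (intro arg_cong[where f="\<lambda>x. x mod m"] sum.cong refl) (use True in \<open>simp add: mat_mult_eq\<close>)
    also have "\<dots> = (\<Sum>k\<in>?I. \<Sum>l\<in>?I. A i l * B l k * C k j) mod m"
      by (simp add: mod_sum_mult_left_eq sum_distrib_right)
    also have "\<dots> = (\<Sum>l\<in>?I. A i l * (\<Sum>k\<in>?I. B l k * C k j)) mod m"
      by (subst sum.swap) (simp add: mult.assoc sum_distrib_left)
    also have "\<dots> = (\<Sum>l\<in>?I. A i l * ((\<Sum>k\<in>?I. B l k * C k j) mod m)) mod m"
      by (rule mod_sum_mult_right_eq[symmetric])
    also have "\<dots> = (\<Sum>l\<in>?I. A i l * mat_mult s m B C l j) mod m"
      by (intro arg_cong[where f="\<lambda>x. x mod m"] sum.cong refl) (use True in \<open>simp add: mat_mult_eq\<close>)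
    also have "\<dots> = mat_mult s m A (mat_mult s m B C) i j"
      using True by (intro mat_mult_eq[symmetric]) auto
    finally show ?thesis .
  qed (simp add: mat_mult_outside)
qed

lemma unitri_carrierI:
  assumes "\<And>i j. A i j \<noteq> 0 \<Longrightarrow> i \<in> {1..s+1} \<and> j \<in> {1..s+1}"
    and "\<And>i. i \<in> {1..s+1} \<Longrightarrow> A i i = 1 mod m"
    and "\<And>i j. j < i \<Longrightarrow> A i j = 0"
    and "\<And>i j. 0 \<le> A i j" and "\<And>i j. A i j < m"
  shows "A \<in> unitri_carrier s m"
  using assms unfolding unitri_carrier_def by auto

lemma unitri_carrierD:
  assumes "A \<in> unitri_carrier s m"
  shows "\<And>i j. \<not> (i \<in> {1..s+1} \<and> j \<in> {1..s+1}) \<Longrightarrow> A i j = 0"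
    and "\<And>i. i \<in> {1..s+1} \<Longrightarrow> A i i = 1 mod m"
    and "\<And>i j. j < i \<Longrightarrow> A i j = 0"
    and "\<And>i j. 0 \<le> A i j" and "\<And>i j. A i j < m"
  using assms unfolding unitri_carrier_def by auto

lemma mat_one_eq: "2 \<le> m \<Longrightarrow> mat_one s m i j = (if i = j \<and> i \<in> {1..s+1} then 1 else 0)"
  by (simp add: mat_one_def)

lemma mat_one_in_unitri_carrier: "2 \<le> m \<Longrightarrow> mat_one s m \<in> unitri_carrier s m"
  by (auto simp: unitri_carrier_def mat_one_eq)

lemma mat_mult_mat_one_left:
  assumes m: "2 \<le> m" and A: "A \<in> unitri_carrier s m"
  shows "mat_mult s m (mat_one s m) A = A"
proof (intro ext)
  fix i j
  show "mat_mult s m (mat_one s m) A i j = A i j"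
  proof (cases "i \<in> {1..s+1} \<and> j \<in> {1..s+1}")
    case True
    have "(\<Sum>k\<in>{1..s+1}. mat_one s m i k * A k j) = (\<Sum>k\<in>{1..s+1}. if k = i then A k j else 0)"
      by (rule sum.cong) (use True m in \<open>auto simp: mat_one_eq\<close>)
    thus ?thesis using True unitri_carrierD(4,5)[OF A] by (simp add: mat_mult_eq)
  qed (use unitri_carrierD(1)[OF A] in \<open>auto simp: mat_mult_def\<close>)
qed

lemma mat_mult_mat_one_right:
  assumes m: "2 \<le> m" and A: "A \<in> unitri_carrier s m"
  shows "mat_mult s m A (mat_one s m) = A"
proof (intro ext)
  fix i j
  show "mat_mult s m A (mat_one s m) i j = A i j"
  proof (cases "i \<in> {1..s+1} \<and> j \<in> {1..s+1}")
    case True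
    have "(\<Sum>k\<in>{1..s+1}. A i k * mat_one s m k j) = (\<Sum>k\<in>{1..s+1}. if k = j then A i k else 0)"
      by (rule sum.cong) (use True m in \<open>auto simp: mat_one_eq\<close>)
    thus ?thesis using True unitri_carrierD(4,5)[OF A] by (simp add: mat_mult_eq)
  qed (use unitri_carrierD(1)[OF A] in \<open>auto simp: mat_mult_def\<close>)
qed

lemma mat_mult_closed:
  assumes m: "2 \<le> m" and A: "A \<in> unitri_carrier s m" and B: "B \<in> unitri_carrier s m"
  shows "mat_mult s m A B \<in> unitri_carrier s m"
proof -
  have lower: "mat_mult s m A B i j = 0" if "j < i" for i j
  proof -
    have "(\<Sum>k\<in>{1..s+1}. A i k * B k j) = 0"
    proof (rule sum.neutral, rule ballI)
      fix k show "A i k * B k j = 0"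
        using unitri_carrierD(3)[OF A, of k i] unitri_carrierD(3)[OF B, of j k] that
        by (cases "k < i") auto
    qed
    thus ?thesis by (simp add: mat_mult_def)
  qed
  have diag: "mat_mult s m A B i i = 1 mod m" if i: "i \<in> {1..s+1}" for i
  proof -
    have "A i k * B k i = (if k = i then 1 else 0)" for k
      using unitri_carrierD(3)[OF A, of k i] unitri_carrierD(3)[OF B, of i k]
        unitri_carrierD(2)[OF A i] unitri_carrierD(2)[OF B i] m
      by (cases "k < i"; cases "k = i") auto
    thus ?thesis using i by (simp add: mat_mult_eq)
  qed
  show ?thesis
    using lower diag m by (intro unitri_carrierI) (auto simp: mat_mult_def)
qed

lemma monoid_Unip: "2 \<le> m \<Longrightarrow> monoid (Unip s m)"
  by unfold_locales (auto simp: Unip_def mat_mult_closed mat_one_in_unitri_carrier mat_mult_assoc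
      mat_mult_mat_one_left mat_mult_mat_one_right)

section \<open>The central subgroup\<close>

definition corner_mat :: "nat \<Rightarrow> int \<Rightarrow> int \<Rightarrow> nat \<Rightarrow> nat \<Rightarrow> int" where
  "corner_mat s m v = (mat_one s m)(1 := (mat_one s m 1)(s + 1 := v))"

definition add_to_corner :: "nat \<Rightarrow> int \<Rightarrow> int \<Rightarrow> (nat \<Rightarrow> nat \<Rightarrow> int) \<Rightarrow> nat \<Rightarrow> nat \<Rightarrow> int" where
  "add_to_corner s m v A = A(1 := (A 1)(s + 1 := (A 1 (s + 1) + v) mod m))"

text \<open>With m = p P, this is the central subgroup of order p generated by I + P E_{1,s+1}
  by which Ubar is formed (see generate_corner_mat).\<close>

definition corner_multiples :: "nat \<Rightarrow> int \<Rightarrow> int \<Rightarrow> (nat \<Rightarrow> nat \<Rightarrow> int) set" where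
  "corner_multiples s m P = {corner_mat s m ((int c * P) mod m) | c. True}"

lemma multiple_modulus_bounds:
  fixes q P m :: int
  assumes q: "2 \<le> q" and P: "1 \<le> P" and m: "m = q * P"
  shows "2 \<le> m" and "P < m"
proof -
  have "2 * 1 \<le> q * P" by (rule mult_mono) (use q P in auto)
  thus "2 \<le> m" using m by simp
  have "1 * P < q * P" by (rule mult_strict_right_mono) (use q P in auto)
  thus "P < m" using m by simp
qed

lemma corner_mat_eq:
  "1 \<le> s \<Longrightarrow> 2 \<le> m \<Longrightarrow>
    corner_mat s m v i k = (if k = i \<and> i \<in> {1..s+1} then 1 else 0) + (if i = 1 \<and> k = s+1 then v else 0)"
  by (auto simp: corner_mat_def mat_one_eq)

lemma add_to_corner_eq:
  "1 \<le> s \<Longrightarrow> add_to_corner s m v A i j = (if i = 1 \<and> j = s+1 then (A i j + v) mod m else A i j)"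
  by (auto simp: add_to_corner_def)

lemma corner_mat_in_unitri_carrier:
  "1 \<le> s \<Longrightarrow> 2 \<le> m \<Longrightarrow> 0 \<le> v \<Longrightarrow> v < m \<Longrightarrow> corner_mat s m v \<in> unitri_carrier s m"
  by (auto simp: unitri_carrier_def corner_mat_eq)

lemma corner_mat_zero: "1 \<le> s \<Longrightarrow> 2 \<le> m \<Longrightarrow> corner_mat s m 0 = mat_one s m"
  by (auto simp: corner_mat_eq mat_one_eq intro!: ext)

text \<open>Multiplying by a corner matrix on either side only adds to the corner entry, because the
  last row and the first column of a unitriangular matrix are those of the identity.\<close>

lemma mat_mult_corner_mat_left:
  assumes s: "1 \<le> s" and m: "2 \<le> m" and A: "A \<in> unitri_carrier s m"
  shows "mat_mult s m (corner_mat s m v) A = add_to_corner s m v A"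
proof (intro ext)
  fix i j
  show "mat_mult s m (corner_mat s m v) A i j = add_to_corner s m v A i j"
  proof (cases "i \<in> {1..s+1} \<and> j \<in> {1..s+1}")
    case True
    have last_row: "A (s+1) j = (if j = s+1 then 1 else 0)"
      using unitri_carrierD(2)[OF A, of "s+1"] unitri_carrierD(3)[OF A, of j "s+1"] True m by auto
    have "(\<Sum>k\<in>{1..s+1}. corner_mat s m v i k * A k j)
        = (\<Sum>k\<in>{1..s+1}. if k = i then A k j else 0)
          + (\<Sum>k\<in>{1..s+1}. if k = s+1 then (if i = 1 then v else 0) * A k j else 0)"
      unfolding sum.distrib[symmetric]
      by (rule sum.cong) (use True s m in \<open>auto simp: corner_mat_eq\<close>)
    also have "\<dots> = A i j + (if i = 1 \<and> j = s+1 then v else 0)"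
      using True last_row by simp
    finally show ?thesis
      using True unitri_carrierD(4,5)[OF A, of i j] s by (auto simp: mat_mult_eq add_to_corner_eq)
  qed (use unitri_carrierD(1)[OF A] s in \<open>auto simp: mat_mult_outside add_to_corner_eq\<close>)
qed

lemma mat_mult_corner_mat_right:
  assumes s: "1 \<le> s" and m: "2 \<le> m" and A: "A \<in> unitri_carrier s m"
  shows "mat_mult s m A (corner_mat s m v) = add_to_corner s m v A"
proof (intro ext)
  fix i j
  show "mat_mult s m A (corner_mat s m v) i j = add_to_corner s m v A i j"
  proof (cases "i \<in> {1..s+1} \<and> j \<in> {1..s+1}")
    case True
    have first_col: "A i 1 = (if i = 1 then 1 else 0)"
      using unitri_carrierD(2)[OF A, of 1] unitri_carrierD(3)[OF A, of 1 i] True m by auto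
    have "(\<Sum>k\<in>{1..s+1}. A i k * corner_mat s m v k j)
        = (\<Sum>k\<in>{1..s+1}. if k = j then A i k else 0)
          + (\<Sum>k\<in>{1..s+1}. if k = 1 then A i k * (if j = s+1 then v else 0) else 0)"
      unfolding sum.distrib[symmetric]
      by (rule sum.cong) (use True s m in \<open>auto simp: corner_mat_eq\<close>)
    also have "\<dots> = A i j + (if i = 1 \<and> j = s+1 then v else 0)"
      using True first_col by simp
    finally show ?thesis
      using True unitri_carrierD(4,5)[OF A, of i j] s by (auto simp: mat_mult_eq add_to_corner_eq)
  qed (use unitri_carrierD(1)[OF A] s in \<open>auto simp: mat_mult_outside add_to_corner_eq\<close>)
qed

lemma mat_mult_corner_mat:
  assumes "1 \<le> s" "2 \<le> m" "0 \<le> b" "b < m"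
  shows "mat_mult s m (corner_mat s m a) (corner_mat s m b) = corner_mat s m ((a + b) mod m)"
  using assms
  by (auto simp: mat_mult_corner_mat_left corner_mat_in_unitri_carrier add_to_corner_eq
      corner_mat_eq add.commute intro!: ext)

lemma mat_mult_corner_multiples:
  assumes "1 \<le> s" "2 \<le> m"
  shows "mat_mult s m (corner_mat s m ((int a * P) mod m)) (corner_mat s m ((int b * P) mod m))
    = corner_mat s m ((int (a + b) * P) mod m)"
proof -
  have "((int a * P) mod m + (int b * P) mod m) mod m = (int (a + b) * P) mod m"
    by (simp add: mod_add_eq distrib_right)
  thus ?thesis using assms by (simp add: mat_mult_corner_mat)
qed

lemma corner_multiples_subset:
  "1 \<le> s \<Longrightarrow> 2 \<le> m \<Longrightarrow> corner_multiples s m P \<subseteq> unitri_carrier s m"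
  by (auto simp: corner_multiples_def intro!: corner_mat_in_unitri_carrier)

lemma mat_one_in_corner_multiples: "1 \<le> s \<Longrightarrow> 2 \<le> m \<Longrightarrow> mat_one s m \<in> corner_multiples s m P"
  unfolding corner_multiples_def by (rule CollectI, rule exI[of _ 0]) (simp add: corner_mat_zero)

lemma corner_multiples_mult_closed:
  "1 \<le> s \<Longrightarrow> 2 \<le> m \<Longrightarrow> A \<in> corner_multiples s m P \<Longrightarrow> B \<in> corner_multiples s m P \<Longrightarrow>
    mat_mult s m A B \<in> corner_multiples s m P"
  unfolding corner_multiples_def using mat_mult_corner_multiples by blast

lemma corner_multiples_central:
  assumes "1 \<le> s" "2 \<le> m" "C \<in> corner_multiples s m P" "A \<in> unitri_carrier s m"
  shows "mat_mult s m C A = mat_mult s m A C"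
  using assms mat_mult_corner_mat_left mat_mult_corner_mat_right
  unfolding corner_multiples_def by auto

lemma inv_corner_multiple:
  assumes s: "1 \<le> s" and q: "2 \<le> q" and P: "1 \<le> P" and m: "m = q * P"
  shows "inv\<^bsub>Unip s m\<^esub> corner_mat s m ((int c * P) mod m) = corner_mat s m ((int (c * nat (q - 1)) * P) mod m)"
proof -
  note m2 = multiple_modulus_bounds(1)[OF q P m]
  let ?U = "Unip s m" and ?h = "corner_mat s m ((int c * P) mod m)"
    and ?w = "corner_mat s m ((int (c * nat (q - 1)) * P) mod m)"
  have "int (c + c * nat (q - 1)) * P = int c * m" "int (c * nat (q - 1) + c) * P = int c * m"
    using q m by (simp_all add: algebra_simps)
  hence "?h \<otimes>\<^bsub>?U\<^esub> ?w = \<one>\<^bsub>?U\<^esub>" "?w \<otimes>\<^bsub>?U\<^esub> ?h = \<one>\<^bsub>?U\<^esub>"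
    using mat_mult_corner_multiples[OF s m2, of c P "c * nat (q - 1)"]
      mat_mult_corner_multiples[OF s m2, of "c * nat (q - 1)" P c]
    by (simp_all add: Unip_def corner_mat_zero[OF s m2])
  moreover have "?h \<in> carrier ?U" "?w \<in> carrier ?U"
    using s m2 by (auto simp: Unip_def intro!: corner_mat_in_unitri_carrier)
  ultimately show ?thesis using monoid.inv_unique'[OF monoid_Unip[OF m2]] by simp
qed

lemma generate_corner_mat:
  assumes s: "1 \<le> s" and q: "2 \<le> q" and P: "1 \<le> P" and m: "m = q * P"
  shows "generate (Unip s m) {corner_mat s m P} = corner_multiples s m P"
proof
  note m2 = multiple_modulus_bounds(1)[OF q P m]
  have generator: "corner_mat s m P = corner_mat s m ((int 1 * P) mod m)"
    using multiple_modulus_bounds(2)[OF q P m] P by simp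
  let ?U = "Unip s m"
  show "generate ?U {corner_mat s m P} \<subseteq> corner_multiples s m P"
  proof
    fix x assume "x \<in> generate ?U {corner_mat s m P}"
    thus "x \<in> corner_multiples s m P"
    proof (induction rule: generate.induct)
      case one thus ?case using mat_one_in_corner_multiples[OF s m2] by (simp add: Unip_def)
    next
      case (incl h) thus ?case using generator unfolding corner_multiples_def by blast
    next
      case (inv h)
      hence "h = corner_mat s m ((int 1 * P) mod m)" by (simp only: singleton_iff generator)
      thus ?case using inv_corner_multiple[OF s q P m, of 1] unfolding corner_multiples_def by blast
    next
      case (eng h1 h2) thus ?case using corner_multiples_mult_closed[OF s m2] by (simp add: Unip_def)
    qed
  qed
  show "corner_multiples s m P \<subseteq> generate ?U {corner_mat s m P}"
  proof
    fix x assume "x \<in> corner_multiples s m P"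
    then obtain c where x: "x = corner_mat s m ((int c * P) mod m)"
      unfolding corner_multiples_def by blast
    have "corner_mat s m ((int c * P) mod m) \<in> generate ?U {corner_mat s m P}" for c
    proof (induction c)
      case 0 thus ?case using generate.one[of ?U "{corner_mat s m P}"] corner_mat_zero[OF s m2]
        by (simp add: Unip_def)
    next
      case (Suc c)
      have "corner_mat s m ((int (Suc c) * P) mod m)
          = corner_mat s m ((int c * P) mod m) \<otimes>\<^bsub>?U\<^esub> corner_mat s m P"
        using mat_mult_corner_multiples[OF s m2, of c P 1] generator by (simp add: Unip_def)
      thus ?case using generate.eng[OF Suc generate.incl[of "corner_mat s m P"]] by simp
    qed
    thus "x \<in> generate ?U {corner_mat s m P}" using x by simp
  qed
qed

lemma r_coset_corner_multiples_self:
  assumes s: "1 \<le> s" and q: "2 \<le> q" and P: "1 \<le> P" and m: "m = q * P"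
    and A: "A \<in> corner_multiples s m P"
  shows "corner_multiples s m P #>\<^bsub>Unip s m\<^esub> A = corner_multiples s m P"
proof
  note m2 = multiple_modulus_bounds(1)[OF q P m]
  show "corner_multiples s m P #>\<^bsub>Unip s m\<^esub> A \<subseteq> corner_multiples s m P"
    unfolding r_coset_def using corner_multiples_mult_closed[OF s m2 _ A] by (auto simp: Unip_def)
  show "corner_multiples s m P \<subseteq> corner_multiples s m P #>\<^bsub>Unip s m\<^esub> A"
  proof
    fix x assume "x \<in> corner_multiples s m P"
    then obtain e where x: "x = corner_mat s m ((int e * P) mod m)"
      unfolding corner_multiples_def by blast
    obtain d where A_d: "A = corner_mat s m ((int d * P) mod m)"
      using A unfolding corner_multiples_def by blast
    define c where "c = e + d * nat (q - 1)"
    have "int (c + d) * P = int e * P + int d * m" using q m by (simp add: c_def algebra_simps)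
    hence "(int (c + d) * P) mod m = (int e * P) mod m" by simp
    hence "mat_mult s m (corner_mat s m ((int c * P) mod m)) A = x"
      using mat_mult_corner_multiples[OF s m2, of c P d] A_d x by simp
    moreover have "corner_mat s m ((int c * P) mod m) \<in> corner_multiples s m P"
      unfolding corner_multiples_def by blast
    ultimately show "x \<in> corner_multiples s m P #>\<^bsub>Unip s m\<^esub> A"
      unfolding r_coset_def by (auto simp: Unip_def)
  qed
qed

lemma Ubar_eq_Mod_corner_multiples:
  assumes "2 \<le> p" "1 \<le> s"
  shows "Ubar p n s = Unip s (int p * int p ^ (n-s)) Mod corner_multiples s (int p * int p ^ (n-s)) (int p ^ (n-s))"
proof -
  have "central_elt p n s = corner_mat s (int p * int p ^ (n-s)) (int p ^ (n-s))"
    by (simp add: central_elt_def corner_mat_def)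
  moreover have "Ukp p n s = Unip s (int p * int p ^ (n-s))" by (simp add: Ukp_def)
  ultimately show ?thesis
    using generate_corner_mat[of s "int p" "int p ^ (n-s)"] assms by (simp add: Ubar_def)
qed

section \<open>Block and reduction maps\<close>

definition mat_mod :: "int \<Rightarrow> (nat \<Rightarrow> nat \<Rightarrow> int) \<Rightarrow> nat \<Rightarrow> nat \<Rightarrow> int" where
  "mat_mod P A i j = A i j mod P"

definition upper_left_block :: "nat \<Rightarrow> (nat \<Rightarrow> nat \<Rightarrow> int) \<Rightarrow> nat \<Rightarrow> nat \<Rightarrow> int" where
  "upper_left_block s A i j = (if i \<le> s \<and> j \<le> s then A i j else 0)"

definition lower_right_block :: "nat \<Rightarrow> (nat \<Rightarrow> nat \<Rightarrow> int) \<Rightarrow> nat \<Rightarrow> nat \<Rightarrow> int" where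
  "lower_right_block s A i j = (if i \<in> {1..s} \<and> j \<in> {1..s} then A (i+1) (j+1) else 0)"

definition border_mat :: "nat \<Rightarrow> (nat \<Rightarrow> nat \<Rightarrow> int) \<Rightarrow> nat \<Rightarrow> nat \<Rightarrow> int" where
  "border_mat s A i j = (if i \<le> s+1 \<and> j \<le> s+1 then A i j else if i = s+2 \<and> j = s+2 then 1 else 0)"

lemma hom_UnipI:
  assumes "\<And>A. A \<in> unitri_carrier s m \<Longrightarrow> f A \<in> unitri_carrier s' m'"
    and "\<And>A B. A \<in> unitri_carrier s m \<Longrightarrow> B \<in> unitri_carrier s m \<Longrightarrow>
      f (mat_mult s m A B) = mat_mult s' m' (f A) (f B)"
  shows "f \<in> hom (Unip s m) (Unip s' m')"
  using assms by (intro homI) (simp_all add: Unip_def)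

lemma mat_mod_in_unitri_carrier:
  assumes P: "2 \<le> P" and dv: "P dvd m" and A: "A \<in> unitri_carrier s m"
  shows "mat_mod P A \<in> unitri_carrier s P"
proof -
  have "1 mod m mod P = 1 mod P" using dv by (simp add: mod_mod_cancel)
  thus ?thesis using unitri_carrierD[OF A] P by (auto simp: unitri_carrier_def mat_mod_def)
qed

lemma mat_mod_mat_mult:
  assumes dv: "P dvd m"
  shows "mat_mod P (mat_mult s m A B) = mat_mult s P (mat_mod P A) (mat_mod P B)"
proof (intro ext)
  fix i j
  show "mat_mod P (mat_mult s m A B) i j = mat_mult s P (mat_mod P A) (mat_mod P B) i j"
  proof (cases "i \<in> {1..s+1} \<and> j \<in> {1..s+1}")
    case True
    have "mat_mod P (mat_mult s m A B) i j = (\<Sum>k\<in>{1..s+1}. A i k * B k j) mod P"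
      using True dv by (simp add: mat_mod_def mat_mult_eq mod_mod_cancel)
    also have "\<dots> = (\<Sum>k\<in>{1..s+1}. (A i k mod P) * (B k j mod P)) mod P"
      by (simp add: mod_sum_mult_left_eq mod_sum_mult_right_eq)
    also have "\<dots> = mat_mult s P (mat_mod P A) (mat_mod P B) i j"
      using True by (simp add: mat_mod_def mat_mult_eq)
    finally show ?thesis .
  qed (simp add: mat_mod_def mat_mult_outside)
qed

lemma mat_mod_hom: "2 \<le> P \<Longrightarrow> P dvd m \<Longrightarrow> mat_mod P \<in> hom (Unip s m) (Unip s P)"
  by (intro hom_UnipI mat_mod_in_unitri_carrier mat_mod_mat_mult)

lemma upper_left_block_in_unitri_carrier:
  assumes s: "1 \<le> s" and m: "2 \<le> m" and A: "A \<in> unitri_carrier s m"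
  shows "upper_left_block s A \<in> unitri_carrier (s-1) m"
proof (rule unitri_carrierI)
  fix i j assume "upper_left_block s A i j \<noteq> 0"
  thus "i \<in> {1..s-1+1} \<and> j \<in> {1..s-1+1}"
    using unitri_carrierD(1)[OF A, of i j] s by (auto simp: upper_left_block_def split: if_splits)
next
  fix i assume "i \<in> {1..s-1+1}"
  thus "upper_left_block s A i i = 1 mod m"
    using unitri_carrierD(2)[OF A, of i] s by (auto simp: upper_left_block_def)
next
  fix i j :: nat assume "j < i"
  thus "upper_left_block s A i j = 0" using unitri_carrierD(3)[OF A] by (simp add: upper_left_block_def)
next
  fix i j show "0 \<le> upper_left_block s A i j" "upper_left_block s A i j < m"
    using unitri_carrierD(4,5)[OF A] m by (auto simp: upper_left_block_def)
qed

text \<open>Both block maps are multiplicative because the last row and the first column of an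
  upper unitriangular matrix are those of the identity.\<close>

lemma upper_left_block_mat_mult:
  assumes s: "1 \<le> s" and B: "B \<in> unitri_carrier s m"
  shows "upper_left_block s (mat_mult s m A B)
    = mat_mult (s-1) m (upper_left_block s A) (upper_left_block s B)"
proof (intro ext)
  fix i j
  have s_eq: "s - 1 + 1 = s" using s by simp
  show "upper_left_block s (mat_mult s m A B) i j
      = mat_mult (s-1) m (upper_left_block s A) (upper_left_block s B) i j"
  proof (cases "i \<in> {1..s} \<and> j \<in> {1..s}")
    case True
    have "B (s+1) j = 0" using unitri_carrierD(3)[OF B, of j "s+1"] True by simp
    hence "(\<Sum>k\<in>{1..s+1}. A i k * B k j) = (\<Sum>k\<in>{1..s}. A i k * B k j)"
      using s by (simp add: sum.cl_ivl_Suc)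
    also have "\<dots> = (\<Sum>k\<in>{1..s}. upper_left_block s A i k * upper_left_block s B k j)"
      by (rule sum.cong) (use True in \<open>auto simp: upper_left_block_def\<close>)
    finally show ?thesis using True by (simp add: upper_left_block_def mat_mult_eq s_eq)
  next
    case False
    hence "\<not> (i \<in> {1..s-1+1} \<and> j \<in> {1..s-1+1})" using s_eq by simp
    with False show ?thesis
      by (cases "i \<le> s \<and> j \<le> s") (auto simp: upper_left_block_def mat_mult_def)
  qed
qed

lemma upper_left_block_hom:
  "1 \<le> s \<Longrightarrow> 2 \<le> m \<Longrightarrow> upper_left_block s \<in> hom (Unip s m) (Unip (s-1) m)"
  by (intro hom_UnipI upper_left_block_in_unitri_carrier upper_left_block_mat_mult)

lemma lower_right_block_in_unitri_carrier:
  assumes s: "1 \<le> s" and m: "2 \<le> m" and A: "A \<in> unitri_carrier s m"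
  shows "lower_right_block s A \<in> unitri_carrier (s-1) m"
proof (rule unitri_carrierI)
  fix i j assume "lower_right_block s A i j \<noteq> 0"
  thus "i \<in> {1..s-1+1} \<and> j \<in> {1..s-1+1}"
    using s by (auto simp: lower_right_block_def split: if_splits)
next
  fix i assume "i \<in> {1..s-1+1}"
  thus "lower_right_block s A i i = 1 mod m"
    using unitri_carrierD(2)[OF A, of "i+1"] s by (auto simp: lower_right_block_def)
next
  fix i j :: nat assume "j < i"
  thus "lower_right_block s A i j = 0"
    using unitri_carrierD(3)[OF A, of "j+1" "i+1"] by (simp add: lower_right_block_def)
next
  fix i j show "0 \<le> lower_right_block s A i j" "lower_right_block s A i j < m"
    using unitri_carrierD(4,5)[OF A] m by (auto simp: lower_right_block_def)
qed

lemma lower_right_block_mat_mult: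
  assumes s: "1 \<le> s" and A: "A \<in> unitri_carrier s m"
  shows "lower_right_block s (mat_mult s m A B)
    = mat_mult (s-1) m (lower_right_block s A) (lower_right_block s B)"
proof (intro ext)
  fix i j
  have s_eq: "s - 1 + 1 = s" using s by simp
  show "lower_right_block s (mat_mult s m A B) i j
      = mat_mult (s-1) m (lower_right_block s A) (lower_right_block s B) i j"
  proof (cases "i \<in> {1..s} \<and> j \<in> {1..s}")
    case True
    have "A (i+1) 1 = 0" using unitri_carrierD(3)[OF A, of 1 "i+1"] True by simp
    hence "(\<Sum>k\<in>{1..s+1}. A (i+1) k * B k (j+1)) = (\<Sum>k\<in>{Suc 1..Suc s}. A (i+1) k * B k (j+1))"
      by (subst sum.atLeast_Suc_atMost) simp_all
    also have "\<dots> = (\<Sum>k\<in>{1..s}. A (i+1) (k+1) * B (k+1) (j+1))"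
      by (subst sum.shift_bounds_cl_Suc_ivl) simp
    also have "\<dots> = (\<Sum>k\<in>{1..s}. lower_right_block s A i k * lower_right_block s B k j)"
      by (rule sum.cong) (use True in \<open>auto simp: lower_right_block_def\<close>)
    finally show ?thesis using True by (simp add: lower_right_block_def mat_mult_eq s_eq)
  next
    case False
    hence "\<not> (i \<in> {1..s-1+1} \<and> j \<in> {1..s-1+1})" using s_eq by simp
    hence "mat_mult (s-1) m (lower_right_block s A) (lower_right_block s B) i j = 0"
      by (rule mat_mult_outside)
    moreover have "lower_right_block s (mat_mult s m A B) i j = 0"
      unfolding lower_right_block_def using False by (rule if_not_P)
    ultimately show ?thesis by simp
  qed
qed

lemma lower_right_block_hom:
  "1 \<le> s \<Longrightarrow> 2 \<le> m \<Longrightarrow> lower_right_block s \<in> hom (Unip s m) (Unip (s-1) m)"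
  by (intro hom_UnipI lower_right_block_in_unitri_carrier lower_right_block_mat_mult)

lemma border_mat_in_unitri_carrier:
  assumes m: "2 \<le> m" and A: "A \<in> unitri_carrier s m"
  shows "border_mat s A \<in> unitri_carrier (s+1) m"
proof (rule unitri_carrierI)
  fix i j assume "border_mat s A i j \<noteq> 0"
  thus "i \<in> {1..s+1+1} \<and> j \<in> {1..s+1+1}"
    using unitri_carrierD(1)[OF A, of i j] by (auto simp: border_mat_def split: if_splits)
next
  fix i assume "i \<in> {1..s+1+1}"
  thus "border_mat s A i i = 1 mod m" using unitri_carrierD(2)[OF A, of i] m by (auto simp: border_mat_def)
next
  fix i j :: nat assume "j < i" thus "border_mat s A i j = 0" using unitri_carrierD(3)[OF A, of j i] by (simp add: border_mat_def)
next
  fix i j show "0 \<le> border_mat s A i j" "border_mat s A i j < m"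
    using unitri_carrierD(4,5)[OF A] m by (auto simp: border_mat_def)
qed

lemma border_mat_mult:
  assumes m: "2 \<le> m"
  shows "border_mat s (mat_mult s m A B) = mat_mult (s+1) m (border_mat s A) (border_mat s B)"
proof (intro ext)
  fix i j
  show "border_mat s (mat_mult s m A B) i j = mat_mult (s+1) m (border_mat s A) (border_mat s B) i j"
  proof (cases "i \<in> {1..s+1+1} \<and> j \<in> {1..s+1+1}")
    case True
    have "mat_mult (s+1) m (border_mat s A) (border_mat s B) i j
        = ((\<Sum>k\<in>{1..s+1}. border_mat s A i k * border_mat s B k j)
            + border_mat s A i (s+2) * border_mat s B (s+2) j) mod m"
      using True by (simp add: mat_mult_eq sum.cl_ivl_Suc)
    moreover have "(\<Sum>k\<in>{1..s+1}. border_mat s A i k * border_mat s B k j)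
        = (if i \<le> s+1 \<and> j \<le> s+1 then \<Sum>k\<in>{1..s+1}. A i k * B k j else 0)"
      by (cases "i \<le> s+1 \<and> j \<le> s+1") (auto simp: border_mat_def intro!: sum.cong sum.neutral)
    ultimately show ?thesis
      using True m by (auto simp: border_mat_def mat_mult_eq)
  next
    case False
    hence "mat_mult (s+1) m (border_mat s A) (border_mat s B) i j = 0" by (rule mat_mult_outside)
    moreover have "border_mat s (mat_mult s m A B) i j = 0"
      using False by (auto simp: border_mat_def mat_mult_def)
    ultimately show ?thesis by simp
  qed
qed

lemma border_mat_hom: "2 \<le> m \<Longrightarrow> border_mat s \<in> hom (Unip s m) (Unip (s+1) m)"
  by (intro hom_UnipI border_mat_in_unitri_carrier border_mat_mult)

lemma mat_mod_corner_multiples: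
  assumes s: "1 \<le> s" and m: "2 \<le> m" and P: "2 \<le> P" and dv: "P dvd m"
    and C: "C \<in> corner_multiples s m P"
  shows "mat_mod P C = mat_one s P"
proof -
  obtain c where c: "C = corner_mat s m ((int c * P) mod m)"
    using C unfolding corner_multiples_def by blast
  have "(int c * P) mod m mod P = 0" using dv by (simp add: mod_mod_cancel)
  thus ?thesis using s m P c by (auto simp: mat_mod_def corner_mat_eq mat_one_eq intro!: ext)
qed

lemma upper_left_block_corner_mat:
  "1 \<le> s \<Longrightarrow> 2 \<le> m \<Longrightarrow> upper_left_block s (corner_mat s m v) = mat_one (s-1) m"
  by (auto simp: upper_left_block_def corner_mat_eq mat_one_eq intro!: ext)

lemma lower_right_block_corner_mat:
  "1 \<le> s \<Longrightarrow> 2 \<le> m \<Longrightarrow> lower_right_block s (corner_mat s m v) = mat_one (s-1) m"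
  by (auto simp: lower_right_block_def corner_mat_eq mat_one_eq intro!: ext)

lemma block_maps_kill_corner_multiples:
  assumes "1 \<le> s" "2 \<le> m"
  shows "\<forall>C\<in>corner_multiples s m P. upper_left_block s C = \<one>\<^bsub>Unip (s-1) m\<^esub>"
    and "\<forall>C\<in>corner_multiples s m P. lower_right_block s C = \<one>\<^bsub>Unip (s-1) m\<^esub>"
  using upper_left_block_corner_mat[OF assms] lower_right_block_corner_mat[OF assms]
  by (auto simp: corner_multiples_def Unip_def)

text \<open>An entry strictly above the diagonal, other than the corner, lies in one of the two blocks.\<close>

lemma upper_entry_zero_if_blocks_trivial:
  assumes m: "2 \<le> m" and ij: "i < j" "i \<in> {1..s+1}" "j \<in> {1..s+1}" "\<not> (i = 1 \<and> j = s+1)"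
    and ul: "upper_left_block s A = mat_one (s-1) m" and lr: "lower_right_block s A = mat_one (s-1) m"
  shows "A i j = 0"
proof (cases "j \<le> s")
  case True
  have "upper_left_block s A i j = mat_one (s-1) m i j" using ul by simp
  thus ?thesis using ij True m by (simp add: upper_left_block_def mat_one_eq)
next
  case False
  hence j: "j = s+1" and i: "2 \<le> i" "i \<le> s" using ij by auto
  have "lower_right_block s A (i-1) s = mat_one (s-1) m (i-1) s" using lr by simp
  moreover have "lower_right_block s A (i-1) s = A i j"
    using i j by (auto simp: lower_right_block_def)
  moreover have "i - 1 \<noteq> s" using i by simp
  ultimately show ?thesis using m i by (simp add: mat_one_eq)
qed

lemma eq_corner_mat_if_blocks_trivial:
  assumes s: "1 \<le> s" and m: "2 \<le> m" and A: "A \<in> unitri_carrier s m"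
    and blocks: "2 \<le> s \<Longrightarrow>
      upper_left_block s A = mat_one (s-1) m \<and> lower_right_block s A = mat_one (s-1) m"
  shows "A = corner_mat s m (A 1 (s+1))"
proof (intro ext)
  fix i j
  show "A i j = corner_mat s m (A 1 (s+1)) i j"
  proof (cases "i \<in> {1..s+1} \<and> j \<in> {1..s+1} \<and> \<not> (i = 1 \<and> j = s+1)")
    case False
    thus ?thesis using unitri_carrierD(1)[OF A, of i j] s m by (auto simp: corner_mat_eq)
  next
    case True
    hence c: "corner_mat s m (A 1 (s+1)) i j = (if i = j then 1 else 0)"
      using s m by (auto simp: corner_mat_eq)
    consider "j < i" | "i = j" | "i < j" by linarith
    thus ?thesis
    proof cases
      case 1 thus ?thesis using c unitri_carrierD(3)[OF A, of j i] by simp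
    next
      case 2 thus ?thesis using c unitri_carrierD(2)[OF A, of i] True m by simp
    next
      case 3
      hence "2 \<le> s" using True by auto
      hence "A i j = 0"
        using upper_entry_zero_if_blocks_trivial[OF m 3] True blocks by blast
      thus ?thesis using c 3 by simp
    qed
  qed
qed

lemma corner_entry_multiple_if_mat_mod_trivial:
  assumes s: "1 \<le> s" and m: "2 \<le> m" and P: "1 \<le> P" and A: "A \<in> unitri_carrier s m"
    and reduced: "2 \<le> P \<Longrightarrow> mat_mod P A = mat_one s P"
  obtains c :: nat where "A 1 (s+1) = (int c * P) mod m"
proof -
  define v where "v = A 1 (s+1)"
  have v: "0 \<le> v" "v < m" using unitri_carrierD(4,5)[OF A] by (auto simp: v_def)
  show ?thesis
  proof (cases "P = 1")
    case True
    show ?thesis by (rule that[of "nat v"]) (use True v in \<open>simp add: v_def\<close>)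
  next
    case False
    hence P2: "2 \<le> P" using P by simp
    hence "mat_mod P A 1 (s+1) = mat_one s P 1 (s+1)" using reduced by simp
    hence "v mod P = 0" using P2 s by (simp add: mat_mod_def mat_one_eq v_def)
    hence "v = (v div P) * P" using div_mult_mod_eq[of v P] by simp
    moreover have "0 \<le> v div P" using v P by (simp add: pos_imp_zdiv_nonneg_iff)
    ultimately show ?thesis by (intro that[of "nat (v div P)"]) (use v in \<open>simp add: v_def\<close>)
  qed
qed

lemma mem_corner_multiples_if_maps_trivial:
  assumes s: "1 \<le> s" and m: "2 \<le> m" and P: "1 \<le> P" and A: "A \<in> unitri_carrier s m"
    and "2 \<le> P \<Longrightarrow> mat_mod P A = mat_one s P"
    and "2 \<le> s \<Longrightarrow>
      upper_left_block s A = mat_one (s-1) m \<and> lower_right_block s A = mat_one (s-1) m"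
  shows "A \<in> corner_multiples s m P"
proof -
  obtain c where "A 1 (s+1) = (int c * P) mod m"
    using corner_entry_multiple_if_mat_mod_trivial[OF s m P A assms(5)] .
  thus ?thesis using eq_corner_mat_if_blocks_trivial[OF s m A assms(6)]
    unfolding corner_multiples_def by auto
qed

lemma corner_multiples_submonoid:
  assumes "1 \<le> s" "2 \<le> m"
  shows "corner_multiples s m P \<subseteq> carrier (Unip s m)" "\<one>\<^bsub>Unip s m\<^esub> \<in> corner_multiples s m P"
  using corner_multiples_subset[OF assms] mat_one_in_corner_multiples[OF assms]
  by (auto simp: Unip_def)

lemma r_coset_mult_corner_multiples:
  assumes s: "1 \<le> s" and m: "2 \<le> m"
    and x: "x \<in> carrier (Unip s m)" and y: "y \<in> carrier (Unip s m)"
  shows "(corner_multiples s m P #>\<^bsub>Unip s m\<^esub> x) <#>\<^bsub>Unip s m\<^esub> (corner_multiples s m P #>\<^bsub>Unip s m\<^esub> y)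
    = corner_multiples s m P #>\<^bsub>Unip s m\<^esub> (x \<otimes>\<^bsub>Unip s m\<^esub> y)"
  using corner_multiples_submonoid[OF s m]
    corner_multiples_mult_closed[OF s m] corner_multiples_central[OF s m]
  by (intro monoid.r_coset_mult_central[OF monoid_Unip[OF m] _ _ _ _ x y]) (auto simp: Unip_def)

lemma border_coset_hom:
  assumes m: "2 \<le> m"
  shows "(\<lambda>A. corner_multiples (s+1) m P #>\<^bsub>Unip (s+1) m\<^esub> border_mat s A)
    \<in> hom (Unip s m) (Unip (s+1) m Mod corner_multiples (s+1) m P)"
proof (rule homI)
  fix A assume "A \<in> carrier (Unip s m)"
  hence "border_mat s A \<in> carrier (Unip (s+1) m)" by (rule hom_in_carrier[OF border_mat_hom[OF m]])
  thus "corner_multiples (s+1) m P #>\<^bsub>Unip (s+1) m\<^esub> border_mat s A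
      \<in> carrier (Unip (s+1) m Mod corner_multiples (s+1) m P)"
    unfolding FactGroup_def RCOSETS_def by auto
next
  fix A B assume A: "A \<in> carrier (Unip s m)" and B: "B \<in> carrier (Unip s m)"
  note border = border_mat_hom[OF m, of s]
  show "corner_multiples (s+1) m P #>\<^bsub>Unip (s+1) m\<^esub> border_mat s (A \<otimes>\<^bsub>Unip s m\<^esub> B)
      = (corner_multiples (s+1) m P #>\<^bsub>Unip (s+1) m\<^esub> border_mat s A)
        \<otimes>\<^bsub>Unip (s+1) m Mod corner_multiples (s+1) m P\<^esub>
        (corner_multiples (s+1) m P #>\<^bsub>Unip (s+1) m\<^esub> border_mat s B)"
    using r_coset_mult_corner_multiples[of "s+1" m, OF _ m hom_in_carrier[OF border A]
        hom_in_carrier[OF border B]] hom_mult[OF border A B]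
    by (simp add: FactGroup_def)
qed

lemma eq_one_if_border_coset_trivial:
  assumes m: "2 \<le> m" and A: "A \<in> carrier (Unip s m)"
    and trivial: "corner_multiples (s+1) m P #>\<^bsub>Unip (s+1) m\<^esub> border_mat s A = corner_multiples (s+1) m P"
  shows "A = \<one>\<^bsub>Unip s m\<^esub>"
proof -
  have A': "A \<in> unitri_carrier s m" using A by (simp add: Unip_def)
  have "mat_mult (s+1) m (mat_one (s+1) m) (border_mat s A)
      \<in> corner_multiples (s+1) m P #>\<^bsub>Unip (s+1) m\<^esub> border_mat s A"
    unfolding r_coset_def using mat_one_in_corner_multiples[of "s+1" m] m by (auto simp: Unip_def)
  hence "border_mat s A \<in> corner_multiples (s+1) m P"
    using trivial mat_mult_mat_one_left[OF m border_mat_in_unitri_carrier[OF m A']] by simp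
  then obtain c where c: "border_mat s A = corner_mat (s+1) m ((int c * P) mod m)"
    unfolding corner_multiples_def by blast
  have "border_mat s A 1 (s+2) = corner_mat (s+1) m ((int c * P) mod m) 1 (s+2)" using c by simp
  hence "(int c * P) mod m = 0" by (simp add: border_mat_def corner_mat_def mat_one_def)
  hence border_one: "border_mat s A = mat_one (s+1) m" using c corner_mat_zero[of "s+1" m] m by simp
  have "A i j = mat_one s m i j" for i j
  proof (cases "i \<le> s+1 \<and> j \<le> s+1")
    case True
    have "border_mat s A i j = mat_one (s+1) m i j" using border_one by simp
    thus ?thesis using True by (simp add: border_mat_def mat_one_def)
  next
    case False thus ?thesis using unitri_carrierD(1)[OF A', of i j] by (auto simp: mat_one_def)
  qed
  thus ?thesis by (auto simp: Unip_def)
qed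

lemma induced_block_homs:
  assumes s: "1 \<le> s" and m: "2 \<le> m"
  shows "2 \<le> P \<Longrightarrow> P dvd m \<Longrightarrow>
      (\<lambda>Z. the_elem (mat_mod P ` Z)) \<in> hom (Unip s m Mod corner_multiples s m P) (Unip s P)"
    and "(\<lambda>Z. the_elem (upper_left_block s ` Z)) \<in> hom (Unip s m Mod corner_multiples s m P) (Unip (s-1) m)"
    and "(\<lambda>Z. the_elem (lower_right_block s ` Z)) \<in> hom (Unip s m Mod corner_multiples s m P) (Unip (s-1) m)"
proof -
  note induced = induced_hom_Mod[OF monoid_Unip[OF m] monoid_Unip corner_multiples_submonoid[OF s m]]
  show "(\<lambda>Z. the_elem (mat_mod P ` Z)) \<in> hom (Unip s m Mod corner_multiples s m P) (Unip s P)"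
    if "2 \<le> P" "P dvd m"
    using induced[OF that(1) mat_mod_hom[OF that]] mat_mod_corner_multiples[OF s m that]
    by (simp add: Unip_def)
  show "(\<lambda>Z. the_elem (upper_left_block s ` Z)) \<in> hom (Unip s m Mod corner_multiples s m P) (Unip (s-1) m)"
    using induced[OF m upper_left_block_hom[OF s m] block_maps_kill_corner_multiples(1)[OF s m]] .
  show "(\<lambda>Z. the_elem (lower_right_block s ` Z)) \<in> hom (Unip s m Mod corner_multiples s m P) (Unip (s-1) m)"
    using induced[OF m lower_right_block_hom[OF s m] block_maps_kill_corner_multiples(2)[OF s m]] .
qed

lemma Mod_corner_multiples_trivial_if_induced_trivial:
  assumes s: "1 \<le> s" and q: "2 \<le> q" and P: "1 \<le> P" and m: "m = q * P"
    and Z: "Z \<in> carrier (Unip s m Mod corner_multiples s m P)"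
    and reduced: "2 \<le> P \<Longrightarrow> the_elem (mat_mod P ` Z) = \<one>\<^bsub>Unip s P\<^esub>"
    and blocks: "2 \<le> s \<Longrightarrow> the_elem (upper_left_block s ` Z) = \<one>\<^bsub>Unip (s-1) m\<^esub>
                       \<and> the_elem (lower_right_block s ` Z) = \<one>\<^bsub>Unip (s-1) m\<^esub>"
  shows "Z = \<one>\<^bsub>Unip s m Mod corner_multiples s m P\<^esub>"
proof -
  note m2 = multiple_modulus_bounds(1)[OF q P m]
  obtain A where A: "A \<in> carrier (Unip s m)" and Z_A: "Z = corner_multiples s m P #>\<^bsub>Unip s m\<^esub> A"
    using Z unfolding FactGroup_def RCOSETS_def by auto
  note image = the_elem_image_r_coset[OF monoid_Unip[OF m2] monoid_Unip
      corner_multiples_submonoid[OF s m2, of P] _ _ A, folded Z_A]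
  have "mat_mod P A = mat_one s P" if P2: "2 \<le> P"
  proof -
    have dv: "P dvd m" using m by simp
    have "the_elem (mat_mod P ` Z) = mat_mod P A"
      using image[OF P2 mat_mod_hom[OF P2 dv]] mat_mod_corner_multiples[OF s m2 P2 dv]
      by (simp add: Unip_def)
    thus ?thesis using reduced[OF P2] by (simp add: Unip_def)
  qed
  moreover have "upper_left_block s A = mat_one (s-1) m \<and> lower_right_block s A = mat_one (s-1) m"
    if "2 \<le> s"
    using blocks[OF that] image[OF m2 upper_left_block_hom[OF s m2] block_maps_kill_corner_multiples(1)[OF s m2]]
      image[OF m2 lower_right_block_hom[OF s m2] block_maps_kill_corner_multiples(2)[OF s m2]]
    by (simp add: Unip_def)
  ultimately have "A \<in> corner_multiples s m P"
    using mem_corner_multiples_if_maps_trivial[OF s m2 P] A by (simp add: Unip_def)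
  hence "Z = corner_multiples s m P" using r_coset_corner_multiples_self[OF s q P m] Z_A by simp
  thus ?thesis by (simp add: FactGroup_def)
qed

lemma mem_T_of_Unip_Mod_corner_multiples:
  assumes s: "1 \<le> s" and q: "2 \<le> q" and P: "1 \<le> P" and m: "m = q * P"
    and x: "x \<in> carrier G"
    and reduced: "2 \<le> P \<Longrightarrow> x \<in> T_of (Unip s P) G T"
    and blocks: "2 \<le> s \<Longrightarrow> x \<in> T_of (Unip (s-1) m) G T"
  shows "x \<in> T_of (Unip s m Mod corner_multiples s m P) G T"
proof -
  note m2 = multiple_modulus_bounds(1)[OF q P m]
  define F where "F =
      (if 2 \<le> P then {(Unip s P, \<lambda>Z. the_elem (mat_mod P ` Z))} else {}) \<union>
      (if 2 \<le> s then {(Unip (s-1) m, \<lambda>Z. the_elem (upper_left_block s ` Z)),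
                     (Unip (s-1) m, \<lambda>Z. the_elem (lower_right_block s ` Z))} else {})"
  have "carrier G \<inter> (\<Inter>(V, f)\<in>F. T_of V G T) \<subseteq> T_of (Unip s m Mod corner_multiples s m P) G T"
  proof (rule T_of_subset_if_separating)
    fix V f assume "(V, f) \<in> F"
    moreover have "P dvd m" using m by simp
    ultimately show "f \<in> hom (Unip s m Mod corner_multiples s m P) V"
      using induced_block_homs[OF s m2] unfolding F_def by (cases "2 \<le> P"; cases "2 \<le> s") auto
  next
    fix Z assume Z: "Z \<in> carrier (Unip s m Mod corner_multiples s m P)"
      and trivial: "\<And>V f. (V, f) \<in> F \<Longrightarrow> f Z = \<one>\<^bsub>V\<^esub>"
    show "Z = \<one>\<^bsub>Unip s m Mod corner_multiples s m P\<^esub>"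
    proof (rule Mod_corner_multiples_trivial_if_induced_trivial[OF s q P m Z])
      show "the_elem (mat_mod P ` Z) = \<one>\<^bsub>Unip s P\<^esub>" if "2 \<le> P"
        using trivial[of "Unip s P" "\<lambda>Z. the_elem (mat_mod P ` Z)"] that by (simp add: F_def)
      show "the_elem (upper_left_block s ` Z) = \<one>\<^bsub>Unip (s-1) m\<^esub>
          \<and> the_elem (lower_right_block s ` Z) = \<one>\<^bsub>Unip (s-1) m\<^esub>" if "2 \<le> s"
        using trivial[of "Unip (s-1) m" "\<lambda>Z. the_elem (upper_left_block s ` Z)"]
          trivial[of "Unip (s-1) m" "\<lambda>Z. the_elem (lower_right_block s ` Z)"] that
        by (simp add: F_def)
    qed
  qed
  moreover have "x \<in> T_of V G T" if "(V, f) \<in> F" for V f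
    using that reduced blocks unfolding F_def by (cases "2 \<le> P"; cases "2 \<le> s") auto
  ultimately show ?thesis using x by blast
qed

lemma T_of_Ubar_Suc_subset_T_of_Ukp:
  assumes p: "2 \<le> p" and s: "s \<in> {1..n-1}"
  shows "T_of (Ubar p n (s+1)) G T \<subseteq> T_of (Ukp p (n-1) s) G T"
proof -
  define P where "P = int p ^ (n-s-1)"
  define m where "m = int p * P"
  have m2: "2 \<le> m" using multiple_modulus_bounds(1)[of "int p" P m] p by (simp add: m_def P_def)
  have "n - 1 - s + 1 = Suc (n-s-1)" using s by auto
  hence "Ukp p (n-1) s = Unip s m" unfolding Ukp_def m_def P_def by (simp only: power_Suc)
  moreover have "Ubar p n (s+1) = Unip (s+1) m Mod corner_multiples (s+1) m P"
    using Ubar_eq_Mod_corner_multiples[OF p, of "s+1" n] by (simp add: m_def P_def)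
  ultimately show ?thesis
    using T_of_subset_if_injective_hom[OF border_coset_hom[OF m2]] eq_one_if_border_coset_trivial[OF m2]
    by (simp add: FactGroup_def)
qed

lemma Inter_T_of_Ukp_subset_T_of_Ubar:
  assumes p: "2 \<le> p" and s: "s \<in> {1..n}"
  shows "carrier G \<inter> (\<Inter>s'\<in>{1..n-1}. T_of (Ukp p (n-1) s') G T) \<subseteq> T_of (Ubar p n s) G T"
proof
  fix x assume x: "x \<in> carrier G \<inter> (\<Inter>s'\<in>{1..n-1}. T_of (Ukp p (n-1) s') G T)"
  define P where "P = int p ^ (n-s)"
  define m where "m = int p * P"
  have s1: "1 \<le> s" and q: "2 \<le> int p" and P1: "1 \<le> P" using s p by (auto simp: P_def)
  have "x \<in> T_of (Unip s m Mod corner_multiples s m P) G T"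
  proof (rule mem_T_of_Unip_Mod_corner_multiples[OF s1 q P1 m_def])
    show "x \<in> T_of (Unip s P) G T" if "2 \<le> P"
    proof -
      have "s \<noteq> n" using that by (auto simp: P_def)
      hence "s \<in> {1..n-1}" and exponent: "n - 1 - s + 1 = n - s" using s by auto
      hence "x \<in> T_of (Ukp p (n-1) s) G T" using x by blast
      moreover have "Ukp p (n-1) s = Unip s P" unfolding Ukp_def P_def by (simp only: exponent)
      ultimately show ?thesis by simp
    qed
    show "x \<in> T_of (Unip (s-1) m) G T" if "2 \<le> s"
    proof -
      have "s - 1 \<in> {1..n-1}" and exponent: "n - 1 - (s - 1) + 1 = Suc (n - s)" using s that by auto
      hence "x \<in> T_of (Ukp p (n-1) (s-1)) G T" using x by blast
      moreover have "Ukp p (n-1) (s-1) = Unip (s-1) m"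
        unfolding Ukp_def m_def P_def by (simp only: exponent power_Suc)
      ultimately show ?thesis by simp
    qed
  qed (use x in blast)
  thus "x \<in> T_of (Ubar p n s) G T"
    using Ubar_eq_Mod_corner_multiples[OF p s1, of n] by (simp add: m_def P_def)
qed

theorem proposition10p1:
  fixes p n :: nat and G :: "('a, 'b) monoid_scheme" and T :: "'a topology"
  assumes "Factorial_Ring.prime p" and "n \<ge> 2" and "profinite_group G T"
  shows "(\<Inter>s\<in>{1..n}. T_of (Ubar p n s) G T) = (\<Inter>s\<in>{1..n-1}. T_of (Ukp p (n-1) s) G T)"
    (is "?Ubars = ?Ukps")
proof
  have p: "2 \<le> p" using assms(1) by (simp add: prime_ge_2_nat)
  show "?Ubars \<subseteq> ?Ukps"
  proof (rule INT_greatest)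
    fix s assume s: "s \<in> {1..n-1}"
    have "?Ubars \<subseteq> T_of (Ubar p n (s+1)) G T" using s by (intro INT_lower) auto
    also have "\<dots> \<subseteq> T_of (Ukp p (n-1) s) G T" by (rule T_of_Ubar_Suc_subset_T_of_Ukp[OF p s])
    finally show "?Ubars \<subseteq> T_of (Ukp p (n-1) s) G T" .
  qed
  show "?Ukps \<subseteq> ?Ubars"
  proof (rule INT_greatest)
    fix s assume s: "s \<in> {1..n}"
    have "?Ukps \<subseteq> T_of (Ukp p (n-1) 1) G T" using assms(2) by (intro INT_lower) auto
    hence "?Ukps \<subseteq> carrier G \<inter> ?Ukps" using T_of_subset_carrier[of "Ukp p (n-1) 1" G T] by blast
    also have "\<dots> \<subseteq> T_of (Ubar p n s) G T" by (rule Inter_T_of_Ukp_subset_T_of_Ubar[OF p s])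
    finally show "?Ukps \<subseteq> T_of (Ubar p n s) G T" .
  qed
qed

end
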